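(* Let $R$ be a commutative ring with identity, $I$ an ideal of $R$ and $M$ an $R$-module. If $M$ is $I$-prime, then the submodule $\Gamma_I(M)$ of $M$ is an $I$-coprime $R$-module. If $M$ is $I$-coprime, then the $R$-module $\Lambda_I(M)$ is an $I$-prime $R$-module.
   Context: All rings are commutative with identity and modules are unital. An $R$-module $M$ is $I$-prime if for all $m\in M$, $Im=0$ implies $m=0$ or $IM=0$; it is $I$-coprime if $IM=0$ or $IM=M$. $\Gamma_I(M)=\{m\in M : I^k m=0 \text{ for some } k\geq 1\}$ and $\Lambda_I(M)=\varprojlim_k M/I^kM$. *)

theory Defs
  imports Complex_Main
begin

definition is_ideal :: "'r::comm_ring_1 set \<Rightarrow> bool" where
  "is_ideal I \<longleftrightarrow> 0 \<in> I \<and> (\<forall>a\<in>I. \<forall>b\<in>I. a + b \<in> I) \<and> (\<forall>r. \<forall>a\<in>I. r * a \<in> I)"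

text \<open>For an additive structure (carrier N, addition ad, zero z) with scalar action sc,
  the submodule I N generated by all sc a m with a in I, m in N: the set of finite sums
  of such products.\<close>
inductive_set ideal_smul :: "'r set \<Rightarrow> ('r \<Rightarrow> 'n \<Rightarrow> 'n) \<Rightarrow> ('n \<Rightarrow> 'n \<Rightarrow> 'n) \<Rightarrow> 'n \<Rightarrow> 'n set \<Rightarrow> 'n set"
  for I sc ad z N where
  zero: "z \<in> ideal_smul I sc ad z N"
| step: "a \<in> I \<Longrightarrow> m \<in> N \<Longrightarrow> x \<in> ideal_smul I sc ad z N \<Longrightarrow> ad (sc a m) x \<in> ideal_smul I sc ad z N"

fun ideal_pow :: "'r::comm_ring_1 set \<Rightarrow> nat \<Rightarrow> 'r set" where
  "ideal_pow I 0 = UNIV"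
| "ideal_pow I (Suc k) = ideal_smul I (*) (+) 0 (ideal_pow I k)"

definition I_prime :: "'r set \<Rightarrow> ('r \<Rightarrow> 'n \<Rightarrow> 'n) \<Rightarrow> ('n \<Rightarrow> 'n \<Rightarrow> 'n) \<Rightarrow> 'n \<Rightarrow> 'n set \<Rightarrow> bool" where
  "I_prime I sc ad z N \<longleftrightarrow>
     (\<forall>m\<in>N. (\<forall>a\<in>I. sc a m = z) \<longrightarrow> m = z \<or> ideal_smul I sc ad z N = {z})"

definition I_coprime :: "'r set \<Rightarrow> ('r \<Rightarrow> 'n \<Rightarrow> 'n) \<Rightarrow> ('n \<Rightarrow> 'n \<Rightarrow> 'n) \<Rightarrow> 'n \<Rightarrow> 'n set \<Rightarrow> bool" where
  "I_coprime I sc ad z N \<longleftrightarrow> ideal_smul I sc ad z N = {z} \<or> ideal_smul I sc ad z N = N"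

definition Gamma :: "'r::comm_ring_1 set \<Rightarrow> ('r \<Rightarrow> 'm::ab_group_add \<Rightarrow> 'm) \<Rightarrow> 'm set" where
  "Gamma I sc = {m. \<exists>k\<ge>1. \<forall>a\<in>ideal_pow I k. sc a m = 0}"

definition powM :: "'r::comm_ring_1 set \<Rightarrow> ('r \<Rightarrow> 'm::ab_group_add \<Rightarrow> 'm) \<Rightarrow> nat \<Rightarrow> 'm set" where
  "powM I sc k = ideal_smul (ideal_pow I k) sc (+) 0 UNIV"

text \<open>Completion Lambda_I(M) = inverse limit of M / I^k M.  An element is a compatible family
  of cosets x k = m_k + I^k M, compatibility meaning that the projection
  M/I^(k+1)M \<rightarrow> M/I^k M sends x (k+1) to x k, i.e. x (k+1) \<subseteq> x k.\<close>
definition Lambda :: "'r::comm_ring_1 set \<Rightarrow> ('r \<Rightarrow> 'm::ab_group_add \<Rightarrow> 'm) \<Rightarrow> (nat \<Rightarrow> 'm set) set" where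
  "Lambda I sc = {x. (\<forall>k. \<exists>m. x k = {m + c |c. c \<in> powM I sc k}) \<and> (\<forall>k. x (Suc k) \<subseteq> x k)}"

definition Lambda_zero :: "'r::comm_ring_1 set \<Rightarrow> ('r \<Rightarrow> 'm::ab_group_add \<Rightarrow> 'm) \<Rightarrow> nat \<Rightarrow> 'm set" where
  "Lambda_zero I sc = (\<lambda>k. powM I sc k)"

definition Lambda_add :: "(nat \<Rightarrow> 'm::ab_group_add set) \<Rightarrow> (nat \<Rightarrow> 'm set) \<Rightarrow> nat \<Rightarrow> 'm set" where
  "Lambda_add x y = (\<lambda>k. {a + b |a b. a \<in> x k \<and> b \<in> y k})"

definition Lambda_scale :: "'r::comm_ring_1 set \<Rightarrow> ('r \<Rightarrow> 'm::ab_group_add \<Rightarrow> 'm) \<Rightarrow> 'r \<Rightarrow> (nat \<Rightarrow> 'm set) \<Rightarrow> nat \<Rightarrow> 'm set" where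
  "Lambda_scale I sc r x = (\<lambda>k. {sc r a + c |a c. a \<in> x k \<and> c \<in> powM I sc k})"

end

theory Submission
  imports Defs
begin

text \<open>If \<open>M\<close> is \<open>I\<close>-prime, either \<open>IM = 0\<close>, and then already \<open>I\<Gamma>\<^sub>I(M) \<subseteq> IM = 0\<close>, or \<open>M\<close> has
  no nonzero element killed by \<open>I\<close>; then by induction no nonzero element is killed by any
  \<open>I\<^sup>k\<close>, so \<open>\<Gamma>\<^sub>I(M) = 0\<close>. Either way \<open>I\<Gamma>\<^sub>I(M) = 0\<close>.
  If \<open>M\<close> is \<open>I\<close>-coprime, either \<open>IM = 0\<close>, and then \<open>I\<close> kills every compatible family of
  cosets, so \<open>I\<Lambda>\<^sub>I(M) = 0\<close>; or \<open>IM = M\<close>, and then \<open>I\<^sup>kM = M\<close> for all \<open>k\<close>, so every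
  quotient \<open>M/I\<^sup>kM\<close> and hence \<open>\<Lambda>\<^sub>I(M)\<close> vanishes. In both cases \<open>\<Lambda>\<^sub>I(M)\<close> is \<open>I\<close>-prime.
  The argument never uses that \<open>I\<close> is an ideal: it works for an arbitrary subset of \<open>R\<close>.\<close>

lemma ideal_smul_add:
  fixes N :: "'n::monoid_add set"
  assumes "x \<in> ideal_smul I sc (+) 0 N" and "y \<in> ideal_smul I sc (+) 0 N"
  shows "x + y \<in> ideal_smul I sc (+) 0 N"
  using assms(1)
proof induction
  case zero
  then show ?case using assms(2) by simp
next
  case (step a m x)
  then show ?case by (metis add.assoc ideal_smul.step)
qed

lemma smul_mem_ideal_smul:
  fixes N :: "'n::monoid_add set"
  assumes "a \<in> I" and "m \<in> N"
  shows "sc a m \<in> ideal_smul I sc (+) 0 N"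
  using ideal_smul.step[OF assms ideal_smul.zero[where sc = sc and ad = "(+)" and z = 0]] by simp

lemma ideal_smul_eq_singleton:
  assumes "\<forall>a\<in>I. \<forall>m\<in>N. sc a m = z" and "ad z z = z"
  shows "ideal_smul I sc ad z N = {z}"
proof -
  have "x = z" if "x \<in> ideal_smul I sc ad z N" for x
    using that assms by induction auto
  then show ?thesis by (auto intro: ideal_smul.zero)
qed

lemma smul_mem_ideal_smul_mult:
  assumes "module sc" and "a \<in> I" and "y \<in> ideal_smul J sc (+) 0 N"
  shows "sc a y \<in> ideal_smul (ideal_smul I (*) (+) 0 J) sc (+) 0 N"
  using assms(3)
proof induction
  case zero
  show ?case by (simp add: module.scale_zero_right[OF assms(1)] ideal_smul.zero)
next
  case (step b m x)
  have "a * b \<in> ideal_smul I (*) (+) 0 J"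
    using assms(2) step(1) by (rule smul_mem_ideal_smul)
  moreover have "sc a (sc b m + x) = sc (a * b) m + sc a x"
    by (simp add: module.scale_right_distrib[OF assms(1)] module.scale_scale[OF assms(1)])
  ultimately show ?case using ideal_smul.step step(2,4) by metis
qed

lemma ideal_smul_ideal_smul_subset:
  assumes "module sc"
  shows "ideal_smul I sc (+) 0 (ideal_smul J sc (+) 0 N)
           \<subseteq> ideal_smul (ideal_smul I (*) (+) 0 J) sc (+) 0 N"
proof
  fix x
  assume "x \<in> ideal_smul I sc (+) 0 (ideal_smul J sc (+) 0 N)"
  then show "x \<in> ideal_smul (ideal_smul I (*) (+) 0 J) sc (+) 0 N"
  proof induction
    case zero
    show ?case by (rule ideal_smul.zero)
  next
    case (step a y x)
    then show ?case by (intro ideal_smul_add smul_mem_ideal_smul_mult[OF assms])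
  qed
qed

lemma powM_0:
  assumes "module sc"
  shows "powM I sc 0 = UNIV"
proof -
  have "sc 1 m \<in> ideal_smul UNIV sc (+) 0 UNIV" for m
    by (rule smul_mem_ideal_smul) auto
  then show ?thesis unfolding powM_def by (auto simp: module.scale_one[OF assms])
qed

lemma powM_eq_UNIV:
  assumes "module sc" and "ideal_smul I sc (+) 0 UNIV = UNIV"
  shows "powM I sc k = UNIV"
proof (induction k)
  case 0
  show ?case using powM_0[OF assms(1)] .
next
  case (Suc k)
  have "UNIV = ideal_smul I sc (+) 0 (powM I sc k)"
    using Suc assms(2) by simp
  also have "\<dots> \<subseteq> powM I sc (Suc k)"
    unfolding powM_def ideal_pow.simps by (rule ideal_smul_ideal_smul_subset[OF assms(1)])
  finally show ?case by blast
qed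

lemma ideal_pow_torsion_free:
  assumes "module sc" and torsion_free: "\<And>m. \<forall>a\<in>I. sc a m = 0 \<Longrightarrow> m = 0"
    and "\<forall>a\<in>ideal_pow I k. sc a m = 0"
  shows "m = 0"
  using assms(3)
proof (induction k arbitrary: m)
  case 0
  then show ?case by (metis UNIV_I ideal_pow.simps(1) module.scale_one[OF assms(1)])
next
  case (Suc k)
  have "sc b m = 0" if "b \<in> ideal_pow I k" for b
  proof (rule torsion_free, intro ballI)
    fix a
    assume "a \<in> I"
    then have "a * b \<in> ideal_pow I (Suc k)"
      using that by (simp add: smul_mem_ideal_smul)
    then show "sc a (sc b m) = 0"
      using Suc.prems by (simp add: module.scale_scale[OF assms(1)])
  qed
  then show ?case by (rule Suc.IH[rule_format])
qed

lemma I_prime_imp_Gamma_I_coprime: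
  assumes "module sc" and "I_prime I sc (+) 0 UNIV"
  shows "I_coprime I sc (+) 0 (Gamma I sc)"
proof -
  have "sc a m = 0" if "a \<in> I" and "m \<in> Gamma I sc" for a m
  proof (cases "ideal_smul I sc (+) 0 UNIV = {0}")
    case True
    then show ?thesis using smul_mem_ideal_smul[OF \<open>a \<in> I\<close> UNIV_I, of sc m] by simp
  next
    case False
    with assms(2) have "\<And>m. \<forall>a\<in>I. sc a m = 0 \<Longrightarrow> m = 0"
      unfolding I_prime_def by blast
    then have "m = 0"
      using \<open>m \<in> Gamma I sc\<close> ideal_pow_torsion_free[OF assms(1)] unfolding Gamma_def by blast
    then show ?thesis by (simp add: module.scale_zero_right[OF assms(1)])
  qed
  then have "ideal_smul I sc (+) 0 (Gamma I sc) = {0}"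
    by (intro ideal_smul_eq_singleton) auto
  then show ?thesis unfolding I_coprime_def by blast
qed

lemma zero_mem_powM: "0 \<in> powM I sc k"
  unfolding powM_def by (rule ideal_smul.zero)

lemma Lambda_add_zero_zero:
  "Lambda_add (Lambda_zero I sc) (Lambda_zero I sc) = Lambda_zero I sc"
proof
  fix k
  have "c \<in> {a + b |a b. a \<in> powM I sc k \<and> b \<in> powM I sc k}" if "c \<in> powM I sc k" for c
    using that zero_mem_powM by force
  then show "Lambda_add (Lambda_zero I sc) (Lambda_zero I sc) k = Lambda_zero I sc k"
    unfolding Lambda_add_def Lambda_zero_def powM_def by (auto intro: ideal_smul_add)
qed

lemma Lambda_scale_eq_zero:
  assumes "\<And>m. sc a m = 0" and "y \<in> Lambda I sc"
  shows "Lambda_scale I sc a y = Lambda_zero I sc"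
proof
  fix k
  from assms(2) obtain m where "y k = {m + c |c. c \<in> powM I sc k}"
    unfolding Lambda_def by blast
  then have "y k \<noteq> {}" using zero_mem_powM by blast
  then show "Lambda_scale I sc a y k = Lambda_zero I sc k"
    unfolding Lambda_scale_def Lambda_zero_def assms(1) by auto
qed

lemma Lambda_eq_zero:
  assumes "module sc" and "ideal_smul I sc (+) 0 UNIV = UNIV" and "x \<in> Lambda I sc"
  shows "x = Lambda_zero I sc"
proof
  fix k
  from assms(3) obtain m where xk: "x k = {m + c |c. c \<in> powM I sc k}"
    unfolding Lambda_def by blast
  have "y \<in> x k" for y
    using xk powM_eq_UNIV[OF assms(1,2)] by (auto intro!: exI[of _ "y - m"])
  then show "x k = Lambda_zero I sc k"
    unfolding Lambda_zero_def powM_eq_UNIV[OF assms(1,2)] by blast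
qed

lemma I_coprime_imp_Lambda_I_prime:
  assumes "module sc" and "I_coprime I sc (+) 0 UNIV"
  shows "I_prime I (Lambda_scale I sc) Lambda_add (Lambda_zero I sc) (Lambda I sc)"
proof (cases "ideal_smul I sc (+) 0 UNIV = {0}")
  case True
  then have "\<And>a m. a \<in> I \<Longrightarrow> sc a m = 0"
    using smul_mem_ideal_smul[OF _ UNIV_I] by (metis singletonD)
  then have "ideal_smul I (Lambda_scale I sc) Lambda_add (Lambda_zero I sc) (Lambda I sc)
               = {Lambda_zero I sc}"
    by (intro ideal_smul_eq_singleton Lambda_add_zero_zero ballI Lambda_scale_eq_zero)
  then show ?thesis unfolding I_prime_def by blast
next
  case False
  with assms(2) have "ideal_smul I sc (+) 0 UNIV = UNIV"
    unfolding I_coprime_def by blast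
  then show ?thesis
    unfolding I_prime_def using Lambda_eq_zero[OF assms(1)] by blast
qed

theorem mainTheorem3:
  fixes I :: "'r::comm_ring_1 set" and sc :: "'r \<Rightarrow> 'm::ab_group_add \<Rightarrow> 'm"
  assumes "is_ideal I" and "module sc"
  shows "(I_prime I sc (+) 0 UNIV \<longrightarrow> I_coprime I sc (+) 0 (Gamma I sc))
       \<and> (I_coprime I sc (+) 0 UNIV \<longrightarrow>
            I_prime I (Lambda_scale I sc) Lambda_add (Lambda_zero I sc) (Lambda I sc))"
  using I_prime_imp_Gamma_I_coprime[OF assms(2)] I_coprime_imp_Lambda_I_prime[OF assms(2)]
  by blast

end
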